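(* For every integer $\ell\ge3$ there exists an admissible partition of $\ell$. Moreover, if $\ell\ge500$, there exists an admissible partition $\mathfrak{a}$ of $\ell$ such that $c^{\mathfrak{a}}((a,b)^6)\ge\ell/200$ for all $(a,b)\in\{3,4,5\}\times\{3,4,5\}$.
   Context: A cyclic partition of $\ell\in\mathbb{N}$ is a tuple $(a_1,\dots,a_t)$ of positive integers with $\sum_i a_i=\ell$, considered up to cyclic rotation, with indices modulo $t$. For a cyclic partition $\mathfrak{a}=(a_1,\dots,a_t)$ and a finite sequence $a'=(a'_1,\dots,a'_{t'})$, let $c^{\mathfrak{a}}(a')=|\{i\in[t]: a_{(i+j)\bmod t}=a'_j\text{ for all }j\in[t']\}|$ (where $x \bmod t$ denotes the element of $[t]$ congruent to $x$); e.g. for $\mathfrak{a}=(a)$, $c^{\mathfrak{a}}(a,a)=1$. Write $c^{\mathfrak{a}}(a,b)$ for $c^{\mathfrak{a}}((a,b))$. A cyclic partition $\mathfrak{a}$ is admissible if all its parts lie in $\{3,4,5\}$ and $c^{\mathfrak{a}}(a,b)=c^{\mathfrak{a}}(b,a)$ for all $a,b\in\{3,4,5\}$. For a sequence $s$, $s^m$ denotes the concatenation of $m$ copies of $s$; so $(a,b)^6$ is a sequence of length $12$. *)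

theory Defs
  imports Complex_Main
begin

text \<open>A cyclic partition (a_1,...,a_t) is represented by a list of its parts
  (a representative of the rotation class); all notions below are rotation invariant.
  Indices are 0-based: position i of the paper corresponds to list index i-1.\<close>

definition cyclic_partition :: "nat list \<Rightarrow> nat \<Rightarrow> bool" where
  "cyclic_partition xs l \<longleftrightarrow> xs \<noteq> [] \<and> (\<forall>x\<in>set xs. 0 < x) \<and> sum_list xs = l"

definition cnt :: "nat list \<Rightarrow> nat list \<Rightarrow> nat" where
  "cnt xs ys = card {i. i < length xs \<and>
      (\<forall>j < length ys. xs ! ((i + j) mod length xs) = ys ! j)}"

definition admissible :: "nat list \<Rightarrow> bool" where
  "admissible xs \<longleftrightarrow> (\<forall>x\<in>set xs. x \<in> {3,4,5}) \<and>
     (\<forall>a\<in>{3,4,5}. \<forall>b\<in>{3,4,5}. cnt xs [a, b] = cnt xs [b, a])"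

definition seq_pow :: "nat list \<Rightarrow> nat \<Rightarrow> nat list" where
  "seq_pow s m = concat (replicate m s)"

end

theory Submission
  imports Defs "HOL-Library.Multiset" "HOL-Library.Sublist"
begin

text \<open>If a word is closed up by appending its first letter, c(a,b) is the
  number of adjacent pairs (a,b) of the closed word, so admissibility says that the multiset of
  adjacent pairs is symmetric. For l = 3x + y with y in {3,4,5}, the word 3^x y is admissible.
  For the second claim take runs 3^p, 4^s, 5^u and an alternating block (a,b)^q for each pair of
  distinct letters, glued so that the pair counts balance. A block u^k contains at least k - m + 1
  occurrences of u^m, and at least k - m of a rotation of u^m, so all nine patterns (a,b)^6 occur
  at least c = l div 200 + 1 times once the runs have length c + 11 and q = c + 6; the total
  length is then adjusted to l through p and s, as every n \<ge> 6 is of the form 3i + 4j.\<close>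

lemma seq_pow_0 [simp]: "seq_pow u 0 = []"
  by (simp add: seq_pow_def)

lemma seq_pow_Suc: "seq_pow u (Suc k) = u @ seq_pow u k"
  by (simp add: seq_pow_def)

lemma seq_pow_add: "seq_pow u (k + m) = seq_pow u k @ seq_pow u m"
  by (simp add: seq_pow_def replicate_add)

lemma length_seq_pow [simp]: "length (seq_pow u k) = k * length u"
  by (induction k) (auto simp: seq_pow_Suc)

lemma seq_pow_eq_Nil_iff [simp]: "seq_pow u k = [] \<longleftrightarrow> k = 0 \<or> u = []"
  by (auto simp: seq_pow_def)

lemma hd_seq_pow [simp]: "0 < k \<Longrightarrow> u \<noteq> [] \<Longrightarrow> hd (seq_pow u k) = hd u"
  by (cases k) (auto simp: seq_pow_Suc)

lemma last_seq_pow [simp]: "0 < k \<Longrightarrow> u \<noteq> [] \<Longrightarrow> last (seq_pow u k) = last u"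
  by (induction k) (auto simp: seq_pow_Suc last_append)

lemma set_seq_pow_subset: "set (seq_pow u k) \<subseteq> set u"
  by (auto simp: seq_pow_def)

lemma sum_list_seq_pow [simp]: "sum_list (seq_pow u k) = k * sum_list u"
  by (induction k) (auto simp: seq_pow_Suc)

lemma seq_pow_double: "seq_pow (u @ u) k = seq_pow u (2 * k)"
  by (induction k) (auto simp: seq_pow_Suc)

lemma seq_pow_Cons_Suc: "seq_pow (a # v) (Suc k) = a # seq_pow (v @ [a]) k @ v"
  by (induction k) (auto simp: seq_pow_Suc)

lemma card_le_cnt:
  assumes "p \<noteq> []" and "inj_on f I"
    and occ: "\<And>i. i \<in> I \<Longrightarrow> \<exists>B D. xs = B @ p @ D \<and> length B = f i"
  shows "card I \<le> cnt xs p"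
proof -
  define S where "S = {i. i < length xs \<and> (\<forall>j < length p. xs ! ((i + j) mod length xs) = p ! j)}"
  have "f ` I \<subseteq> S"
  proof
    fix i assume "i \<in> f ` I"
    then obtain i' where "i' \<in> I" and "i = f i'"
      by blast
    with occ obtain B D where xs: "xs = B @ p @ D" and i: "i = length B"
      by metis
    have "xs ! ((i + j) mod length xs) = p ! j" if "j < length p" for j
    proof -
      have "(i + j) mod length xs = length B + j"
        using that by (simp add: xs i)
      then show ?thesis
        using that by (simp add: xs nth_append)
    qed
    moreover have "i < length xs"
      using \<open>p \<noteq> []\<close> by (simp add: xs i)
    ultimately show "i \<in> S"
      by (simp add: S_def)
  qed
  moreover have "finite S"
    by (rule finite_subset[of _ "{..<length xs}"]) (auto simp: S_def)
  ultimately have "card (f ` I) \<le> card S"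
    by (rule card_mono[rotated])
  then show ?thesis
    using \<open>inj_on f I\<close> by (simp add: card_image cnt_def S_def)
qed

lemma cnt_seq_pow_ge:
  assumes "sublist (seq_pow u k) xs" and "u \<noteq> []" and "0 < m" and "K + m \<le> Suc k"
  shows "K \<le> cnt xs (seq_pow u m)"
proof -
  obtain A C where xs: "xs = A @ seq_pow u k @ C"
    using assms(1) by (auto simp: sublist_def)
  have "card {..<K} \<le> cnt xs (seq_pow u m)"
  proof (rule card_le_cnt[where f = "\<lambda>q. length A + q * length u"])
    fix q assume "q \<in> {..<K}"
    then have "k = q + (m + (k - q - m))"
      using assms(4) by auto
    then have "xs = (A @ seq_pow u q) @ seq_pow u m @ (seq_pow u (k - q - m) @ C)"
      by (metis xs seq_pow_add append_assoc)
    then show "\<exists>B D. xs = B @ seq_pow u m @ D \<and> length B = length A + q * length u"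
      by fastforce
  qed (use assms(2,3) in \<open>auto simp: inj_on_def\<close>)
  then show ?thesis by simp
qed

lemma cnt_seq_pow_rotated_ge:
  assumes "sublist (seq_pow (a # v) k) xs" and "0 < m" and "K + m \<le> k"
  shows "K \<le> cnt xs (seq_pow (v @ [a]) m)"
proof (rule cnt_seq_pow_ge)
  have "seq_pow (a # v) k = [a] @ seq_pow (v @ [a]) (k - 1) @ v"
    using assms(2,3) seq_pow_Cons_Suc[of a v "k - 1"] by simp
  then have "sublist (seq_pow (v @ [a]) (k - 1)) (seq_pow (a # v) k)"
    by (simp only: sublist_appendI)
  then show "sublist (seq_pow (v @ [a]) (k - 1)) xs"
    using assms(1) by (rule sublist_order.order_trans)
qed (use assms in auto)

definition adj_pairs :: "'a list \<Rightarrow> ('a \<times> 'a) multiset" where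
  "adj_pairs xs = mset (zip xs (tl xs))"

lemma adj_pairs_Nil [simp]: "adj_pairs [] = {#}"
  and adj_pairs_singleton [simp]: "adj_pairs [x] = {#}"
  and adj_pairs_Cons_Cons [simp]: "adj_pairs (x # y # ys) = add_mset (x, y) (adj_pairs (y # ys))"
  by (simp_all add: adj_pairs_def)

lemma adj_pairs_Cons: "xs \<noteq> [] \<Longrightarrow> adj_pairs (x # xs) = add_mset (x, hd xs) (adj_pairs xs)"
  by (cases xs) simp_all

lemma adj_pairs_append:
  "xs \<noteq> [] \<Longrightarrow> ys \<noteq> [] \<Longrightarrow> adj_pairs (xs @ ys) = adj_pairs xs + add_mset (last xs, hd ys) (adj_pairs ys)"
proof (induction xs rule: induct_list012)
  case (3 x y zs)
  then show ?case by simp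
qed (auto simp: neq_Nil_conv)

lemma adj_pairs_seq_pow_singleton [simp]: "adj_pairs (seq_pow [a] n) = replicate_mset (n - 1) (a, a)"
  by (induction n rule: induct_nat_012) (auto simp: seq_pow_Suc)

lemma adj_pairs_seq_pow_doubleton [simp]:
  "0 < k \<Longrightarrow> adj_pairs (seq_pow [a, b] k) = replicate_mset k (a, b) + replicate_mset (k - 1) (b, a)"
  by (induction k rule: induct_nat_012) (auto simp: seq_pow_Suc)

lemma cnt_two_eq_count_adj_pairs:
  assumes "xs \<noteq> []"
  shows "cnt xs [a, b] = count (adj_pairs (xs @ [hd xs])) (a, b)"
proof -
  have "tl (xs @ [hd xs]) = rotate1 xs"
    using assms by (cases xs) simp_all
  then have "zip (xs @ [hd xs]) (tl (xs @ [hd xs])) = zip xs (rotate1 xs)"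
    by (simp add: zip_append1)
  then have "count (adj_pairs (xs @ [hd xs])) (a, b) = card {i. i < length xs \<and> (a, b) = zip xs (rotate1 xs) ! i}"
    by (simp add: adj_pairs_def count_mset count_list_eq_length_filter length_filter_conv_card)
  also have "\<dots> = cnt xs [a, b]"
    unfolding cnt_def using assms
    by (intro arg_cong[where f = card]) (auto simp: nth_rotate1 less_Suc_eq numeral_2_eq_2)
  finally show ?thesis ..
qed

lemma admissibleI:
  assumes "set xs \<subseteq> {3, 4, 5}" and "xs \<noteq> []"
    and "\<And>a b. a \<in> {3, 4, 5} \<Longrightarrow> b \<in> {3, 4, 5} \<Longrightarrow>
      count (adj_pairs (xs @ [hd xs])) (a, b) = count (adj_pairs (xs @ [hd xs])) (b, a)"
  shows "admissible xs"
  using assms by (auto simp: admissible_def cnt_two_eq_count_adj_pairs)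

lemma admissible_seq_pow_three_snoc:
  assumes "y \<in> {3, 4, 5}"
  shows "admissible (seq_pow [3] x @ [y])"
proof (rule admissibleI)
  show "set (seq_pow [3] x @ [y]) \<subseteq> {3, 4, 5}"
    using assms set_seq_pow_subset[of "[3]" x] by auto
  have "adj_pairs ((seq_pow [3] x @ [y]) @ [hd (seq_pow [3] x @ [y])]) =
      (if x = 0 then {#(y, y)#} else replicate_mset (x - 1) (3, 3) + {#(3, y), (y, 3)#})"
    by (simp add: adj_pairs_append adj_pairs_Cons)
  then show "count (adj_pairs ((seq_pow [3] x @ [y]) @ [hd (seq_pow [3] x @ [y])])) (a, b) =
        count (adj_pairs ((seq_pow [3] x @ [y]) @ [hd (seq_pow [3] x @ [y])])) (b, a)"
    if "a \<in> {3, 4, 5}" "b \<in> {3, 4, 5}" for a b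
    using that assms by (elim insertE) simp_all
qed simp

lemma exists_admissible_partition:
  assumes "3 \<le> l"
  shows "\<exists>xs. cyclic_partition xs l \<and> admissible xs"
proof -
  define y where "y = 3 + l mod 3"
  define x where "x = (l - y) div 3"
  have y: "y \<in> {3, 4, 5}"
    by (auto simp: y_def)
  have l: "l = 3 * x + y"
    using assms unfolding x_def y_def by presburger
  have "cyclic_partition (seq_pow [3] x @ [y]) l"
    using y l set_seq_pow_subset[of "[3]" x] by (auto simp: cyclic_partition_def)
  with admissible_seq_pow_three_snoc[OF y] show ?thesis by blast
qed

text \<open>An alternating block (a,b)^q has one more pair (a,b) than (b,a). The orientation of the three
  alternating blocks and the prefix 3,4,5 are chosen so that, together with the junctions, every
  surplus is cancelled.\<close>
definition block_word :: "nat \<Rightarrow> nat \<Rightarrow> nat \<Rightarrow> nat \<Rightarrow> nat list" where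
  "block_word p q u s = [3, 4, 5] @ seq_pow [3] p @ seq_pow [4, 3] q @ seq_pow [5, 3] q @
     seq_pow [5] u @ seq_pow [4, 5] q @ seq_pow [4] s"

lemma sum_list_block_word: "sum_list (block_word p q u s) = 12 + 3 * p + 24 * q + 5 * u + 4 * s"
  by (simp add: block_word_def)

lemma set_block_word: "set (block_word p q u s) \<subseteq> {3, 4, 5}"
  using set_seq_pow_subset[of "[3]" p] set_seq_pow_subset[of "[4, 3]" q]
    set_seq_pow_subset[of "[5, 3]" q] set_seq_pow_subset[of "[5]" u]
    set_seq_pow_subset[of "[4, 5]" q] set_seq_pow_subset[of "[4]" s]
  by (auto simp: block_word_def)

lemma adj_pairs_closed_block_word:
  assumes "0 < p" "0 < q" "0 < u" "0 < s"
  shows "adj_pairs (block_word p q u s @ [3]) =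
     {#(3, 4), (4, 5), (5, 3), (3, 4), (3, 5), (3, 5), (5, 4), (5, 4), (4, 3)#} +
     replicate_mset (p - 1) (3, 3) + replicate_mset (u - 1) (5, 5) + replicate_mset (s - 1) (4, 4) +
     replicate_mset q (4, 3) + replicate_mset (q - 1) (3, 4) +
     replicate_mset q (5, 3) + replicate_mset (q - 1) (3, 5) +
     replicate_mset q (4, 5) + replicate_mset (q - 1) (5, 4)"
  using assms by (simp add: block_word_def adj_pairs_append adj_pairs_Cons)

lemma admissible_block_word:
  assumes "0 < p" "0 < q" "0 < u" "0 < s"
  shows "admissible (block_word p q u s)"
proof (rule admissibleI[OF set_block_word])
  show "block_word p q u s \<noteq> []"
    by (simp add: block_word_def)
  have hd: "hd (block_word p q u s) = 3"
    by (simp add: block_word_def)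
  show "count (adj_pairs (block_word p q u s @ [hd (block_word p q u s)])) (a, b) =
             count (adj_pairs (block_word p q u s @ [hd (block_word p q u s)])) (b, a)"
    if "a \<in> {3, 4, 5}" "b \<in> {3, 4, 5}" for a b :: nat
    using that \<open>0 < q\<close> unfolding hd adj_pairs_closed_block_word[OF assms]
    by (elim insertE) simp_all
qed

lemma sublist_block_word:
  "sublist (seq_pow [3] p) (block_word p q u s)" "sublist (seq_pow [5] u) (block_word p q u s)"
  "sublist (seq_pow [4] s) (block_word p q u s)" "sublist (seq_pow [4, 3] q) (block_word p q u s)"
  "sublist (seq_pow [5, 3] q) (block_word p q u s)" "sublist (seq_pow [4, 5] q) (block_word p q u s)"
  unfolding block_word_def
  by (simp_all add: sublist_append sublist_Cons_right)

lemma cnt_block_word_ge: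
  assumes "K + 11 \<le> p" "K + 6 \<le> q" "K + 11 \<le> u" "K + 11 \<le> s"
    and "a \<in> {3, 4, 5}" "b \<in> {3, 4, 5}"
  shows "K \<le> cnt (block_word p q u s) (seq_pow [a, b] 6)"
proof -
  let ?W = "block_word p q u s"
  have run: "K \<le> cnt ?W (seq_pow [c, c] 6)" if "sublist (seq_pow [c] k) ?W" "K + 11 \<le> k" for c k
    using cnt_seq_pow_ge[OF that(1), of 12 K] that(2) seq_pow_double[of "[c]" 6] by simp
  have alt: "K \<le> cnt ?W (seq_pow [c, d] 6)" "K \<le> cnt ?W (seq_pow [d, c] 6)"
    if "sublist (seq_pow [c, d] q) ?W" for c d
    using cnt_seq_pow_ge[OF that, of 6 K] cnt_seq_pow_rotated_ge[OF that, of 6 K] assms(2) by simp_all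
  note counts = run[OF sublist_block_word(1) assms(1)] run[OF sublist_block_word(2) assms(3)]
    run[OF sublist_block_word(3) assms(4)]
    alt[OF sublist_block_word(4)] alt[OF sublist_block_word(5)] alt[OF sublist_block_word(6)]
  show ?thesis
    using assms(5,6) counts by (elim insertE) simp_all
qed

lemma sum_of_threes_and_fours: "6 \<le> (n::nat) \<Longrightarrow> \<exists>i j. n = 3 * i + 4 * j"
  by presburger

lemma exists_admissible_partition_rich:
  assumes "500 \<le> l"
  shows "\<exists>xs. cyclic_partition xs l \<and> admissible xs \<and>
           (\<forall>a\<in>{3, 4, 5}. \<forall>b\<in>{3, 4, 5}. real l / 200 \<le> real (cnt xs (seq_pow [a, b] 6)))"
proof -
  define c where "c = l div 200 + 1"
  have "200 * (l div 200) + l mod 200 = l" "l mod 200 < 200"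
    by simp_all
  then have c_large: "l < 200 * c"
    unfolding c_def distrib_left by linarith
  have c_small: "36 * c + 294 \<le> l"
    using \<open>200 * (l div 200) + l mod 200 = l\<close> assms unfolding c_def distrib_left by linarith
  have "6 \<le> l - (36 * c + 288)"
    using c_small by linarith
  then obtain i j where ij: "l - (36 * c + 288) = 3 * i + 4 * j"
    using sum_of_threes_and_fours by blast
  define W where "W = block_word (c + 11 + i) (c + 6) (c + 11) (c + 11 + j)"
  have "sum_list W = l"
    using ij c_small by (simp add: W_def sum_list_block_word)
  moreover have "W \<noteq> []"
    by (simp add: W_def block_word_def)
  ultimately have "cyclic_partition W l"
    using set_block_word[of "c + 11 + i" "c + 6" "c + 11" "c + 11 + j"]
    unfolding cyclic_partition_def W_def by auto
  moreover have "admissible W"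
    unfolding W_def by (rule admissible_block_word) simp_all
  moreover have "real l / 200 \<le> real (cnt W (seq_pow [a, b] 6))"
    if "a \<in> {3, 4, 5}" "b \<in> {3, 4, 5}" for a b
  proof -
    have "c \<le> cnt W (seq_pow [a, b] 6)"
      unfolding W_def by (rule cnt_block_word_ge) (use that in simp_all)
    then show ?thesis
      using c_large by linarith
  qed
  ultimately show ?thesis
    by blast
qed

theorem proposition4p1:
  shows "(\<forall>l::nat. l \<ge> 3 \<longrightarrow> (\<exists>xs. cyclic_partition xs l \<and> admissible xs)) \<and>
         (\<forall>l::nat. l \<ge> 500 \<longrightarrow> (\<exists>xs. cyclic_partition xs l \<and> admissible xs \<and>
            (\<forall>a\<in>{3,4,5::nat}. \<forall>b\<in>{3,4,5::nat}.
               real (cnt xs (seq_pow [a, b] 6)) \<ge> real l / 200)))"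
  using exists_admissible_partition exists_admissible_partition_rich by blast

end
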